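(* Let $\Gamma$ be a finite, compact, connected metric tree. Then $$\lambda_k\big(L^{\rm a/st}(\Gamma)\big)=\lambda_{k+1}\big(L^{\rm st}(\Gamma)\big)\qquad\text{for all }k\in\mathbb N.$$
   Context: A finite compact metric graph $\Gamma$ consists of finitely many edges $e_n=[x_{2n-1},x_{2n}]\subset\mathbb R$ of positive lengths and a vertex set $\mathcal V$ which is a partition of the set of all edge endpoints; a tree is a connected such graph without cycles. $f(x_j)$ denotes the limit of $f$ at endpoint $x_j$, and $\partial f(x_j)=f'(x_j)$ if $x_j$ is a left endpoint, $-f'(x_j)$ if a right endpoint. The standard Laplacian $L^{\rm st}(\Gamma)$ acts as $-f''$ on each edge with domain all $f\in W^2_2(\Gamma\setminus\mathcal V)=\bigoplus_nW^2_2(e_n)$ with, at every vertex $v$, $f(x_i)=f(x_j)$ for $x_i,x_j\in v$ and $\sum_{x_j\in v}\partial f(x_j)=0$. The anti-standard Laplacian $L^{\rm a/st}(\Gamma)$ acts as $-f''$ with domain all $f\in W^2_2(\Gamma\setminus\mathcal V)$ with, at every vertex $v$, $\sum_{x_j\in v}f(x_j)=0$ and $\partial f(x_i)=\partial f(x_j)$ for $x_i,x_j\in v$. Eigenvalues $\lambda_1\le\lambda_2\le\dots$ are counted with multiplicities. *)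

theory Defs
  imports "HOL-Analysis.Analysis" "HOL-Library.Function_Algebras"
begin

text \<open>Edges are indexed n = 0..N-1 and
  endpoints j = 0..2N-1; edge n is the interval [x (2n), x (2n+1)], so the endpoint
  2n is its left endpoint and 2n+1 its right endpoint (paper: x_{2n-1}, x_{2n}).\<close>

definition metric_graph :: "nat \<Rightarrow> (nat \<Rightarrow> real) \<Rightarrow> nat set set \<Rightarrow> bool" where
  "metric_graph N x V \<longleftrightarrow>
     (\<forall>n<N. x (2*n) < x (2*n+1)) \<and>
     (\<forall>v\<in>V. v \<noteq> {}) \<and> \<Union>V = {..<2*N} \<and>
     (\<forall>v\<in>V. \<forall>w\<in>V. v \<noteq> w \<longrightarrow> v \<inter> w = {})"

definition joins :: "nat set set \<Rightarrow> nat \<Rightarrow> nat set \<Rightarrow> nat set \<Rightarrow> bool" where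
  "joins V n u w \<longleftrightarrow> u \<in> V \<and> w \<in> V \<and>
     ((2*n \<in> u \<and> 2*n+1 \<in> w) \<or> (2*n \<in> w \<and> 2*n+1 \<in> u))"

definition graph_connected :: "nat \<Rightarrow> nat set set \<Rightarrow> bool" where
  "graph_connected N V \<longleftrightarrow>
     (\<forall>u\<in>V. \<forall>w\<in>V. (u, w) \<in> {(a, b). \<exists>n<N. joins V n a b}\<^sup>*)"

text \<open>A cycle: a closed walk of length m \<ge> 1 through pairwise distinct edges
  (loops and multiple edges give cycles).\<close>
definition has_cycle :: "nat \<Rightarrow> nat set set \<Rightarrow> bool" where
  "has_cycle N V \<longleftrightarrow>
     (\<exists>m (es :: nat \<Rightarrow> nat) (vs :: nat \<Rightarrow> nat set). m \<ge> 1 \<and> inj_on es {..<m} \<and>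
        (\<forall>i<m. es i < N \<and> joins V (es i) (vs i) (vs (Suc i))) \<and> vs m = vs 0)"

definition metric_tree :: "nat \<Rightarrow> (nat \<Rightarrow> real) \<Rightarrow> nat set set \<Rightarrow> bool" where
  "metric_tree N x V \<longleftrightarrow> metric_graph N x V \<and> graph_connected N V \<and> \<not> has_cycle N V"

text \<open>Functions on the graph: f n is the function on edge n (set to 0 off the edge).\<close>
definition edge_dom :: "(nat \<Rightarrow> real) \<Rightarrow> nat \<Rightarrow> real set" where
  "edge_dom x n = {x (2*n) .. x (2*n+1)}"

definition edge_deriv :: "(nat \<Rightarrow> real) \<Rightarrow> (nat \<Rightarrow> real \<Rightarrow> real) \<Rightarrow> nat \<Rightarrow> real \<Rightarrow> real" where
  "edge_deriv x f n t = vector_derivative (f n) (at t within edge_dom x n)"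

text \<open>f(x_j) and the normal derivative \<partial>f(x_j) at endpoint j.\<close>
definition endval :: "(nat \<Rightarrow> real) \<Rightarrow> (nat \<Rightarrow> real \<Rightarrow> real) \<Rightarrow> nat \<Rightarrow> real" where
  "endval x f j = f (j div 2) (x j)"

definition endderiv :: "(nat \<Rightarrow> real) \<Rightarrow> (nat \<Rightarrow> real \<Rightarrow> real) \<Rightarrow> nat \<Rightarrow> real" where
  "endderiv x f j = (if even j then edge_deriv x f (j div 2) (x j)
                     else - edge_deriv x f (j div 2) (x j))"

definition standard_cond :: "(nat \<Rightarrow> real) \<Rightarrow> nat set set \<Rightarrow> (nat \<Rightarrow> real \<Rightarrow> real) \<Rightarrow> bool" where
  "standard_cond x V f \<longleftrightarrow>
     (\<forall>v\<in>V. (\<forall>i\<in>v. \<forall>j\<in>v. endval x f i = endval x f j) \<and> (\<Sum>j\<in>v. endderiv x f j) = 0)"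

definition antistandard_cond :: "(nat \<Rightarrow> real) \<Rightarrow> nat set set \<Rightarrow> (nat \<Rightarrow> real \<Rightarrow> real) \<Rightarrow> bool" where
  "antistandard_cond x V f \<longleftrightarrow>
     (\<forall>v\<in>V. (\<Sum>j\<in>v. endval x f j) = 0 \<and> (\<forall>i\<in>v. \<forall>j\<in>v. endderiv x f i = endderiv x f j))"

text \<open>Eigenspace of -d^2/dx^2 with the given vertex conditions for the value lam:
  on each edge f is twice differentiable on the closed edge with -f'' = lam f
  (for such functions this is equivalent to membership in W^2_2(e_n) with -f'' = lam f).\<close>
definition eigenspace ::
  "nat \<Rightarrow> (nat \<Rightarrow> real) \<Rightarrow> ((nat \<Rightarrow> real \<Rightarrow> real) \<Rightarrow> bool) \<Rightarrow> real \<Rightarrow> (nat \<Rightarrow> real \<Rightarrow> real) set" where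
  "eigenspace N x cond lam = {f.
     (\<forall>n t. (N \<le> n \<or> t \<notin> edge_dom x n) \<longrightarrow> f n t = 0) \<and>
     (\<forall>n<N. \<forall>t\<in>edge_dom x n.
        (f n has_vector_derivative edge_deriv x f n t) (at t within edge_dom x n) \<and>
        (edge_deriv x f n has_vector_derivative (- lam * f n t)) (at t within edge_dom x n)) \<and>
     cond f}"

definition fscale :: "real \<Rightarrow> (nat \<Rightarrow> real \<Rightarrow> real) \<Rightarrow> (nat \<Rightarrow> real \<Rightarrow> real)" where
  "fscale c f = (\<lambda>n t. c * f n t)"

definition multiplicity_ev :: "nat \<Rightarrow> (nat \<Rightarrow> real) \<Rightarrow> ((nat \<Rightarrow> real \<Rightarrow> real) \<Rightarrow> bool) \<Rightarrow> real \<Rightarrow> nat" where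
  "multiplicity_ev N x cond lam = vector_space.dim fscale (eigenspace N x cond lam)"

definition ev_count :: "nat \<Rightarrow> (nat \<Rightarrow> real) \<Rightarrow> ((nat \<Rightarrow> real \<Rightarrow> real) \<Rightarrow> bool) \<Rightarrow> real \<Rightarrow> nat" where
  "ev_count N x cond mu =
     (\<Sum>lam\<in>{lam. lam \<le> mu \<and> 0 < multiplicity_ev N x cond lam}. multiplicity_ev N x cond lam)"

text \<open>lambda_k (k \<ge> 1): the k-th eigenvalue in nondecreasing order counted with multiplicities.\<close>
definition lap_eigenvalue :: "nat \<Rightarrow> (nat \<Rightarrow> real) \<Rightarrow> ((nat \<Rightarrow> real \<Rightarrow> real) \<Rightarrow> bool) \<Rightarrow> nat \<Rightarrow> real" where
  "lap_eigenvalue N x cond k = Inf {mu. k \<le> ev_count N x cond mu}"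

end

theory Submission
  imports Defs
begin

text \<open>A tree is bipartite, so the edges carry signs \<open>\<sigma>\<^sub>n = \<plusminus>1\<close> such that \<open>\<sigma>\<^sub>n\<close> times the
  orientation of an endpoint (\<open>+1\<close> at left, \<open>-1\<close> at right ends) depends only on its vertex.
  For \<open>\<lambda> \<noteq> 0\<close> the map \<open>f \<mapsto> \<sigma> f'\<close> then carries standard eigenfunctions to anti-standard
  ones and vice versa, with inverse \<open>g \<mapsto> -(\<sigma>/\<lambda>) g'\<close>, so every nonzero eigenvalue has the
  same multiplicity for both operators. Integration by parts shows that neither operator has
  negative eigenvalues and that 0-eigenfunctions are constant on the edges: by connectedness 0 is a
  simple standard eigenvalue, whereas edge constants with vanishing vertex sums vanish on a tree,
  so 0 is not an anti-standard eigenvalue. Hence the anti-standard spectrum is the standard one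
  with a single 0 removed.\<close>

interpretation FS: vector_space fscale
  by unfold_locales (auto simp: fscale_def algebra_simps fun_eq_iff)

interpretation FP: vector_space_pair fscale fscale ..

context vector_space_pair
begin

lemma dim_eq_if_bij_betw_linear_on:
  assumes E: "vs1.subspace E" and bij: "bij_betw f E E'"
    and add: "\<And>u v. u \<in> E \<Longrightarrow> v \<in> E \<Longrightarrow> f (u + v) = f u + f v"
    and scale: "\<And>c u. u \<in> E \<Longrightarrow> f (c *a u) = c *b f u"
  shows "vs2.dim E' = vs1.dim E"
proof -
  obtain B where B: "B \<subseteq> E" "vs1.independent B" "E \<subseteq> vs1.span B" "card B = vs1.dim E"
    using vs1.basis_exists by blast
  have span_B: "vs1.span B = E"
    using B E vs1.span_subspace by blast
  define L where "L = construct B f"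
  interpret L: Vector_Spaces.linear s1 s2 L
    unfolding L_def by (rule linear_construct[OF B(2)])
  have f0: "f 0 = 0"
    using scale[of 0 0] E vs1.subspace_0 by simp
  have L_eq: "L u = f u" if "u \<in> E" for u
  proof -
    have "u \<in> vs1.span B" using that span_B by simp
    then have "u \<in> E \<and> L u = f u"
    proof (induction rule: vs1.span_induct_alt)
      case base
      show ?case using E vs1.subspace_0 f0 by simp
    next
      case (step c b u)
      have "b \<in> E" "L b = f b"
        using step.hyps B(1) construct_basis[OF B(2)] unfolding L_def by auto
      moreover have "c *a b \<in> E"
        using E \<open>b \<in> E\<close> vs1.subspace_scale by blast
      ultimately show ?case
        using step.IH E vs1.subspace_add by (simp add: L.add L.scale add scale)
    qed
    then show ?thesis by simp
  qed
  have inj: "inj_on L (vs1.span B)"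
    using bij L_eq span_B unfolding bij_betw_def inj_on_def by auto
  have "vs2.span (L ` B) = E'"
    using bij L_eq span_B L.span_image unfolding bij_betw_def by (auto simp: image_def)
  moreover have "vs2.independent (L ` B)"
    using L.dependent_inj_imageD[OF _ inj] B(2) by blast
  ultimately have "vs2.dim E' = card (L ` B)"
    using vs2.dim_eq_card vs2.span_span by metis
  also have "\<dots> = vs1.dim E"
    using card_image[OF inj_on_subset[OF inj vs1.span_superset]] B(4) by simp
  finally show ?thesis .
qed

end

lemma FS_dim_eq_0: "E \<subseteq> {0} \<Longrightarrow> FS.dim E = 0"
  by (rule FS.dim_unique[of "{}"]) (auto simp: FS.independent_empty)

lemma FS_dim_eq_1:
  assumes "u \<noteq> 0" "u \<in> E" and "\<And>f. f \<in> E \<Longrightarrow> \<exists>c. f = fscale c u"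
  shows "FS.dim E = 1"
  by (rule FS.dim_unique[of "{u}"]) (use assms in \<open>auto simp: FS.span_singleton FS.independent_insert\<close>)

definition vertex_of :: "nat set set \<Rightarrow> nat \<Rightarrow> nat set" where
  "vertex_of V j = (THE v. v \<in> V \<and> j \<in> v)"

abbreviation left_vertex :: "nat set set \<Rightarrow> nat \<Rightarrow> nat set" where
  "left_vertex V n \<equiv> vertex_of V (2*n)"

abbreviation right_vertex :: "nat set set \<Rightarrow> nat \<Rightarrow> nat set" where
  "right_vertex V n \<equiv> vertex_of V (2*n+1)"

definition edge_rel :: "nat set set \<Rightarrow> nat set \<Rightarrow> (nat set \<times> nat set) set" where
  "edge_rel V F = {(a, b). \<exists>n\<in>F. joins V n a b}"

lemma vertex_of_eq:
  assumes "metric_graph N x V" "v \<in> V" "j \<in> v"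
  shows "vertex_of V j = v"
  unfolding vertex_of_def
proof (rule the_equality)
  show "v \<in> V \<and> j \<in> v" using assms by blast
  show "w = v" if "w \<in> V \<and> j \<in> w" for w
    using that assms unfolding metric_graph_def by blast
qed

lemma vertex_of_mem:
  assumes G: "metric_graph N x V" and j: "j < 2*N"
  shows "vertex_of V j \<in> V" "j \<in> vertex_of V j"
proof -
  obtain v where "v \<in> V" "j \<in> v"
    using G j unfolding metric_graph_def by blast
  then show "vertex_of V j \<in> V" "j \<in> vertex_of V j"
    using vertex_of_eq[OF G] by auto
qed

lemma vertex_nonempty: "metric_graph N x V \<Longrightarrow> v \<in> V \<Longrightarrow> v \<noteq> {}"
  unfolding metric_graph_def by auto

lemma endpoint_less:
  "metric_graph N x V \<Longrightarrow> v \<in> V \<Longrightarrow> j \<in> v \<Longrightarrow> j < 2*N"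
  unfolding metric_graph_def by auto

lemma joins_iff:
  assumes G: "metric_graph N x V" and n: "n < N"
  shows "joins V n u w \<longleftrightarrow>
    (u = left_vertex V n \<and> w = right_vertex V n) \<or> (u = right_vertex V n \<and> w = left_vertex V n)"
proof -
  have "2*n < 2*N" "2*n+1 < 2*N" using n by auto
  then show ?thesis
    unfolding joins_def using vertex_of_mem[OF G] vertex_of_eq[OF G] by metis
qed

lemma joins_same_edge:
  assumes "metric_graph N x V" "n < N" "joins V n a b" "joins V n c d"
  shows "a = c \<or> a = d"
  using assms(3,4) unfolding joins_iff[OF assms(1,2)] by auto

lemma sum_over_vertices:
  assumes G: "metric_graph N x V"
  shows "(\<Sum>v\<in>V. \<Sum>j\<in>v. g j) = (\<Sum>j<2*N. g j)"
proof -
  have "finite v" if "v \<in> V" for v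
    using endpoint_less[OF G that] finite_subset[of v "{..<2*N}"] by auto
  then have "(\<Sum>v\<in>V. \<Sum>j\<in>v. g j) = (\<Sum>j\<in>\<Union>V. g j)"
    using G unfolding metric_graph_def by (subst sum.Union_disjoint) auto
  also have "\<dots> = (\<Sum>j<2*N. g j)"
    using G unfolding metric_graph_def by simp
  finally show ?thesis .
qed

lemma sum_endpoints_by_edges:
  fixes g :: "nat \<Rightarrow> 'a::comm_monoid_add"
  shows "(\<Sum>j<2*N. g j) = (\<Sum>n<N. g (2*n) + g (2*n+1))"
  by (induction N) (auto simp: sum.distrib ac_simps)

lemma relpow_skip_cycle:
  assumes "p 0 = a" "p k = b" "\<forall>t<k. (p t, p (Suc t)) \<in> R"
    and "i < j" "j \<le> k" "p i = p j"
  shows "(a, b) \<in> R ^^ (k - (j - i))"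
proof -
  define q where "q t = (if t < i then p t else p (t + (j - i)))" for t
  have "\<forall>t < k - (j - i). (q t, q (Suc t)) \<in> R"
  proof (intro allI impI)
    fix t assume t: "t < k - (j - i)"
    consider "Suc t < i" | "Suc t = i" | "i \<le> t" by linarith
    then show "(q t, q (Suc t)) \<in> R"
    proof cases
      case 2
      then have "q t = p t" "q (Suc t) = p (Suc t)"
        using assms by (auto simp: q_def)
      then show ?thesis using assms t by auto
    qed (use assms t in \<open>auto simp: q_def\<close>)
  qed
  moreover have "q 0 = a" "q (k - (j - i)) = b"
    using assms by (auto simp: q_def)
  ultimately show ?thesis
    unfolding relpow_fun_conv by blast
qed

lemma rtrancl_imp_injective_walk:
  assumes "(a, b) \<in> R\<^sup>*"
  obtains k p where "p 0 = a" "p k = b" "\<forall>i<k. (p i, p (Suc i)) \<in> R" "inj_on p {..k}"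
proof -
  define k where "k = (LEAST k. (a, b) \<in> R ^^ k)"
  have "(a, b) \<in> R ^^ k"
    unfolding k_def by (rule LeastI_ex) (use assms rtrancl_power in blast)
  then obtain p where p: "p 0 = a" "p k = b" "\<forall>i<k. (p i, p (Suc i)) \<in> R"
    unfolding relpow_fun_conv by blast
  have "p i \<noteq> p j" if "i < j" "j \<le> k" for i j
  proof
    assume "p i = p j"
    then have "(a, b) \<in> R ^^ (k - (j - i))"
      using relpow_skip_cycle[OF p that] by blast
    then have "k \<le> k - (j - i)"
      unfolding k_def by (rule Least_le)
    then show False using that by linarith
  qed
  then have "inj_on p {..k}"
    by (intro inj_onI) (metis atMost_iff linorder_neqE_nat)
  with p that show ?thesis by blast
qed

lemma tree_edge_is_bridge:
  assumes T: "metric_tree N x V" and e: "e < N" and F: "F \<subseteq> {..<N} - {e}"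
  shows "(right_vertex V e, left_vertex V e) \<notin> (edge_rel V F)\<^sup>*"
proof
  have G: "metric_graph N x V" using T unfolding metric_tree_def by blast
  assume "(right_vertex V e, left_vertex V e) \<in> (edge_rel V F)\<^sup>*"
  then obtain k p where p: "p 0 = right_vertex V e" "p k = left_vertex V e"
      "\<forall>i<k. (p i, p (Suc i)) \<in> edge_rel V F" and inj: "inj_on p {..k}"
    by (rule rtrancl_imp_injective_walk)
  have "\<forall>i<k. \<exists>n. n < N \<and> n \<noteq> e \<and> joins V n (p i) (p (Suc i))"
    using p(3) F unfolding edge_rel_def by blast
  then obtain es where es: "\<And>i. i < k \<Longrightarrow> es i < N \<and> es i \<noteq> e \<and> joins V (es i) (p i) (p (Suc i))"
    by metis
  text \<open>Closing the walk with the edge e itself yields a cycle.\<close>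
  define es' where "es' i = (if i < k then es i else e)" for i
  define vs where "vs i = (if i \<le> k then p i else right_vertex V e)" for i
  have distinct: "es i \<noteq> es j" if "i < j" "j < k" for i j
  proof
    assume "es i = es j"
    then have "joins V (es j) (p i) (p (Suc i))" "joins V (es j) (p j) (p (Suc j))" "es j < N"
      using es[of i] es[of j] that by auto
    then have "p i = p j \<or> p i = p (Suc j)"
      using joins_same_edge[OF G] by blast
    moreover have "p i \<noteq> p j" "p i \<noteq> p (Suc j)"
      using that inj_onD[OF inj, of i j] inj_onD[OF inj, of i "Suc j"] by auto
    ultimately show False by blast
  qed
  have "inj_on es' {..<Suc k}"
  proof (rule inj_onI)
    fix i j assume ij: "i \<in> {..<Suc k}" "j \<in> {..<Suc k}" "es' i = es' j"
    show "i = j"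
    proof (cases "i < k \<and> j < k")
      case True
      then show ?thesis using distinct ij(3) unfolding es'_def by (metis nat_neq_iff)
    next
      case False
      have "es' i = e \<longleftrightarrow> i = k" "es' j = e \<longleftrightarrow> j = k"
        using es ij(1,2) unfolding es'_def by auto
      then show ?thesis using False ij by auto
    qed
  qed
  moreover have "es' i < N \<and> joins V (es' i) (vs i) (vs (Suc i))" if "i < Suc k" for i
  proof (cases "i < k")
    case True
    then show ?thesis using es[OF True] by (simp add: es'_def vs_def)
  next
    case False
    then have "i = k" using that by simp
    then show ?thesis using e p(2) by (simp add: es'_def vs_def joins_iff[OF G e])
  qed
  ultimately have "has_cycle N V"
    unfolding has_cycle_def by (intro exI[of _ "Suc k"] exI[of _ es'] exI[of _ vs]) (auto simp: vs_def p(1))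
  then show False using T unfolding metric_tree_def by blast
qed

lemma edge_rel_rtrancl_edge_ends:
  assumes G: "metric_graph N x V" and n: "n \<in> F" "n < N"
  shows "(a, left_vertex V n) \<in> (edge_rel V F)\<^sup>* \<longleftrightarrow> (a, right_vertex V n) \<in> (edge_rel V F)\<^sup>*"
proof -
  have "(left_vertex V n, right_vertex V n) \<in> edge_rel V F" "(right_vertex V n, left_vertex V n) \<in> edge_rel V F"
    unfolding edge_rel_def using n joins_iff[OF G n(2)] by auto
  then show ?thesis by (blast intro: rtrancl_into_rtrancl)
qed

lemma tree_bipartite:
  assumes T: "metric_tree N x V"
  obtains y :: "nat set \<Rightarrow> real" where "\<And>v. y v = 1 \<or> y v = -1"
    "\<And>n. n < N \<Longrightarrow> y (left_vertex V n) = - y (right_vertex V n)"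
proof -
  have G: "metric_graph N x V" using T unfolding metric_tree_def by blast
  have "\<exists>y::nat set \<Rightarrow> real. (\<forall>v. y v = 1 \<or> y v = -1) \<and>
      (\<forall>n\<in>F. y (left_vertex V n) = - y (right_vertex V n))"
    if "finite F" "F \<subseteq> {..<N}" for F
    using that
  proof (induction F rule: finite_induct)
    case empty
    show ?case by (intro exI[of _ "\<lambda>_. 1"]) auto
  next
    case (insert e F)
    then obtain y :: "nat set \<Rightarrow> real" where y: "\<forall>v. y v = 1 \<or> y v = -1"
      "\<forall>n\<in>F. y (left_vertex V n) = - y (right_vertex V n)"
      by auto
    have e: "e < N" using insert by auto
    show ?case
    proof (cases "y (left_vertex V e) = - y (right_vertex V e)")
      case True
      then show ?thesis using y by (intro exI[of _ y]) auto
    next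
      case False
      text \<open>Flip the signs on the component of the right end of e in the forest F.\<close>
      define C where "C = {v. (right_vertex V e, v) \<in> (edge_rel V F)\<^sup>*}"
      define y' where "y' v = (if v \<in> C then - y v else y v)" for v
      have "left_vertex V e \<notin> C"
        using tree_edge_is_bridge[OF T e] insert unfolding C_def by blast
      moreover have "right_vertex V e \<in> C" unfolding C_def by simp
      moreover have "y (left_vertex V e) = y (right_vertex V e)"
        using False y(1) by (metis minus_minus)
      moreover have "left_vertex V n \<in> C \<longleftrightarrow> right_vertex V n \<in> C" if "n \<in> F" for n
        unfolding C_def using edge_rel_rtrancl_edge_ends[OF G that] that insert by blast
      ultimately show ?thesis
        using y by (intro exI[of _ y']) (auto simp: y'_def)
    qed
  qed
  from this[of "{..<N}"] that show ?thesis by auto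
qed

lemma tree_vertex_sums_eq_0_imp_eq_0:
  assumes T: "metric_tree N x V"
    and sums: "\<And>v. v \<in> V \<Longrightarrow> (\<Sum>j\<in>v. c (j div 2)) = (0::real)" and e: "e < N"
  shows "c e = 0"
proof -
  have G: "metric_graph N x V" using T unfolding metric_tree_def by blast
  obtain y :: "nat set \<Rightarrow> real" where y_sign: "\<And>v. y v = 1 \<or> y v = -1"
    and y_alt: "\<And>n. n < N \<Longrightarrow> y (left_vertex V n) = - y (right_vertex V n)"
    using tree_bipartite[OF T] by blast
  text \<open>Sum the signed vertex sums over the component C of the right end of e in the tree with
    e removed: every other edge of C enters twice with opposite signs.\<close>
  define F where "F = {..<N} - {e}"
  define C where "C = {v. (right_vertex V e, v) \<in> (edge_rel V F)\<^sup>*}"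
  define g where "g j = (if vertex_of V j \<in> C then y (vertex_of V j) * c (j div 2) else 0)" for j
  have "0 = (\<Sum>v\<in>V. if v \<in> C then y v * (\<Sum>j\<in>v. c (j div 2)) else 0)"
    by (intro sum.neutral[symmetric]) (simp add: sums)
  also have "\<dots> = (\<Sum>v\<in>V. \<Sum>j\<in>v. g j)"
  proof (rule sum.cong[OF refl])
    fix v assume v: "v \<in> V"
    have "(\<Sum>j\<in>v. g j) = (\<Sum>j\<in>v. if v \<in> C then y v * c (j div 2) else 0)"
      by (rule sum.cong) (simp_all add: g_def vertex_of_eq[OF G v])
    then show "(if v \<in> C then y v * (\<Sum>j\<in>v. c (j div 2)) else 0) = (\<Sum>j\<in>v. g j)"
      by (simp add: sum_distrib_left)
  qed
  also have "\<dots> = (\<Sum>n<N. g (2*n) + g (2*n+1))"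
    unfolding sum_over_vertices[OF G] by (rule sum_endpoints_by_edges)
  also have "\<dots> = g (2*e) + g (2*e+1)"
  proof -
    have "g (2*n) + g (2*n+1) = 0" if "n \<in> {..<N} - {e}" for n
    proof -
      have "n \<in> F" "n < N" using that unfolding F_def by auto
      then have "left_vertex V n \<in> C \<longleftrightarrow> right_vertex V n \<in> C"
        unfolding C_def using edge_rel_rtrancl_edge_ends[OF G] by simp
      then show ?thesis using y_alt[of n] that by (simp add: g_def)
    qed
    then show ?thesis
      using sum.remove[of "{..<N}" e "\<lambda>n. g (2*n) + g (2*n+1)"] e by simp
  qed
  also have "\<dots> = y (right_vertex V e) * c e"
  proof -
    have "left_vertex V e \<notin> C" "right_vertex V e \<in> C"
      using tree_edge_is_bridge[OF T e] unfolding C_def F_def by auto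
    then show ?thesis by (simp add: g_def)
  qed
  finally show ?thesis using y_sign[of "right_vertex V e"] by auto
qed

definition edge_eigenfun :: "nat \<Rightarrow> (nat \<Rightarrow> real) \<Rightarrow> real \<Rightarrow> (nat \<Rightarrow> real \<Rightarrow> real) \<Rightarrow> bool" where
  "edge_eigenfun N x lam f \<longleftrightarrow>
     (\<forall>n t. (N \<le> n \<or> t \<notin> edge_dom x n) \<longrightarrow> f n t = 0) \<and>
     (\<forall>n<N. \<forall>t\<in>edge_dom x n.
        (f n has_vector_derivative edge_deriv x f n t) (at t within edge_dom x n) \<and>
        (edge_deriv x f n has_vector_derivative (- lam * f n t)) (at t within edge_dom x n))"

lemma mem_eigenspace_iff: "f \<in> eigenspace N x cond lam \<longleftrightarrow> edge_eigenfun N x lam f \<and> cond f"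
  unfolding eigenspace_def edge_eigenfun_def by simp

lemma edge_eigenfun_outside:
  "edge_eigenfun N x lam f \<Longrightarrow> N \<le> n \<or> t \<notin> edge_dom x n \<Longrightarrow> f n t = 0"
  unfolding edge_eigenfun_def by blast

lemma edge_eigenfun_derivs:
  assumes "edge_eigenfun N x lam f" "n < N" "t \<in> edge_dom x n"
  shows "(f n has_vector_derivative edge_deriv x f n t) (at t within edge_dom x n)"
    and "(edge_deriv x f n has_vector_derivative (- lam * f n t)) (at t within edge_dom x n)"
  using assms unfolding edge_eigenfun_def by blast+

lemma edge_less: "metric_graph N x V \<Longrightarrow> n < N \<Longrightarrow> x (2*n) < x (2*n+1)"
  unfolding metric_graph_def by auto

lemma endpoint_in_edge_dom:
  assumes G: "metric_graph N x V" and j: "j < 2*N"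
  shows "x j \<in> edge_dom x (j div 2)" and "j div 2 < N"
proof -
  show "j div 2 < N" using j by simp
  have "j = 2*(j div 2) \<or> j = 2*(j div 2) + 1" by auto
  then show "x j \<in> edge_dom x (j div 2)"
    using edge_less[OF G, of "j div 2"] j unfolding edge_dom_def by auto
qed

lemma edge_deriv_eqI:
  assumes G: "metric_graph N x V" and n: "n < N" and t: "t \<in> edge_dom x n"
    and "(f n has_vector_derivative d) (at t within edge_dom x n)"
  shows "edge_deriv x f n t = d"
  using vector_derivative_within_closed_interval[OF edge_less[OF G n]] assms(3,4)
  unfolding edge_deriv_def edge_dom_def by blast

lemma edge_eigenfunI:
  assumes G: "metric_graph N x V"
    and outside: "\<And>n t. N \<le> n \<or> t \<notin> edge_dom x n \<Longrightarrow> f n t = 0"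
    and f': "\<And>n t. n < N \<Longrightarrow> t \<in> edge_dom x n \<Longrightarrow>
      (f n has_vector_derivative f' n t) (at t within edge_dom x n)"
    and f'': "\<And>n t. n < N \<Longrightarrow> t \<in> edge_dom x n \<Longrightarrow>
      (f' n has_vector_derivative (- lam * f n t)) (at t within edge_dom x n)"
  shows "edge_eigenfun N x lam f"
    and "\<And>n t. n < N \<Longrightarrow> t \<in> edge_dom x n \<Longrightarrow> edge_deriv x f n t = f' n t"
proof -
  show eq: "edge_deriv x f n t = f' n t" if "n < N" "t \<in> edge_dom x n" for n t
    using edge_deriv_eqI[OF G that, where f = f] f'[OF that] .
  have "(edge_deriv x f n has_vector_derivative (- lam * f n t)) (at t within edge_dom x n)"
    if "n < N" "t \<in> edge_dom x n" for n t
    using has_vector_derivative_transform[OF that(2) _ f''[OF that]] eq that(1) by blast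
  then show "edge_eigenfun N x lam f"
    unfolding edge_eigenfun_def using outside f' eq by simp
qed

lemma edge_eigenfun_add:
  assumes G: "metric_graph N x V" and f: "edge_eigenfun N x lam f" and g: "edge_eigenfun N x lam g"
  shows "edge_eigenfun N x lam (f + g)"
    and "\<And>n t. n < N \<Longrightarrow> t \<in> edge_dom x n \<Longrightarrow>
      edge_deriv x (f + g) n t = edge_deriv x f n t + edge_deriv x g n t"
proof -
  let ?d = "\<lambda>n t. edge_deriv x f n t + edge_deriv x g n t"
  have "(f + g) n t = 0" if "N \<le> n \<or> t \<notin> edge_dom x n" for n t
    using that edge_eigenfun_outside[OF f] edge_eigenfun_outside[OF g] by simp
  moreover have "((f + g) n has_vector_derivative ?d n t) (at t within edge_dom x n)"
    if "n < N" "t \<in> edge_dom x n" for n t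
    using has_vector_derivative_add[OF edge_eigenfun_derivs(1)[OF f that] edge_eigenfun_derivs(1)[OF g that]]
    by (simp add: plus_fun_def)
  moreover have "(?d n has_vector_derivative (- lam * (f + g) n t)) (at t within edge_dom x n)"
    if "n < N" "t \<in> edge_dom x n" for n t
    using has_vector_derivative_add[OF edge_eigenfun_derivs(2)[OF f that] edge_eigenfun_derivs(2)[OF g that]]
    by (simp add: algebra_simps)
  ultimately show "edge_eigenfun N x lam (f + g)"
    and "\<And>n t. n < N \<Longrightarrow> t \<in> edge_dom x n \<Longrightarrow> edge_deriv x (f + g) n t = ?d n t"
    using edge_eigenfunI[OF G, where f = "f + g" and f' = ?d] by blast+
qed

lemma edge_eigenfun_scale:
  assumes G: "metric_graph N x V" and f: "edge_eigenfun N x lam f"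
  shows "edge_eigenfun N x lam (fscale c f)"
    and "\<And>n t. n < N \<Longrightarrow> t \<in> edge_dom x n \<Longrightarrow> edge_deriv x (fscale c f) n t = c * edge_deriv x f n t"
proof -
  let ?d = "\<lambda>n t. c * edge_deriv x f n t"
  have "fscale c f n t = 0" if "N \<le> n \<or> t \<notin> edge_dom x n" for n t
    using that edge_eigenfun_outside[OF f] by (simp add: fscale_def)
  moreover have "(fscale c f n has_vector_derivative ?d n t) (at t within edge_dom x n)"
    if "n < N" "t \<in> edge_dom x n" for n t
    using has_vector_derivative_mult_right[OF edge_eigenfun_derivs(1)[OF f that]]
    by (simp add: fscale_def)
  moreover have "(?d n has_vector_derivative (- lam * fscale c f n t)) (at t within edge_dom x n)"
    if "n < N" "t \<in> edge_dom x n" for n t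
    using has_vector_derivative_mult_right[OF edge_eigenfun_derivs(2)[OF f that], of c]
    by (simp add: fscale_def algebra_simps)
  ultimately show "edge_eigenfun N x lam (fscale c f)"
    and "\<And>n t. n < N \<Longrightarrow> t \<in> edge_dom x n \<Longrightarrow> edge_deriv x (fscale c f) n t = ?d n t"
    using edge_eigenfunI[OF G, where f = "fscale c f" and f' = ?d] by blast+
qed

lemma edge_eigenfun_zero:
  assumes G: "metric_graph N x V"
  shows "edge_eigenfun N x lam 0" and "\<And>n t. n < N \<Longrightarrow> t \<in> edge_dom x n \<Longrightarrow> edge_deriv x 0 n t = 0"
  using edge_eigenfunI[OF G, where f = 0 and f' = "\<lambda>n t. 0" and lam = lam]
  by (simp_all add: zero_fun_def)

definition boundary_form :: "nat \<Rightarrow> (nat \<Rightarrow> real) \<Rightarrow> (nat \<Rightarrow> real \<Rightarrow> real) \<Rightarrow> real" where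
  "boundary_form N x f = (\<Sum>j<2*N. endval x f j * endderiv x f j)"

lemma edge_energy_has_integral:
  assumes G: "metric_graph N x V" and f: "edge_eigenfun N x lam f" and n: "n < N"
  shows "((\<lambda>t. (edge_deriv x f n t)\<^sup>2 - lam * (f n t)\<^sup>2) has_integral
      f n (x (2*n+1)) * edge_deriv x f n (x (2*n+1)) - f n (x (2*n)) * edge_deriv x f n (x (2*n)))
    (edge_dom x n)"
  unfolding edge_dom_def
proof (rule fundamental_theorem_of_calculus)
  show "x (2*n) \<le> x (2*n+1)" using edge_less[OF G n] by simp
  fix t assume "t \<in> {x (2*n)..x (2*n+1)}"
  then have t: "t \<in> edge_dom x n" unfolding edge_dom_def .
  from has_vector_derivative_mult[OF edge_eigenfun_derivs[OF f n t]]
  show "((\<lambda>t. f n t * edge_deriv x f n t) has_vector_derivative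
      (edge_deriv x f n t)\<^sup>2 - lam * (f n t)\<^sup>2) (at t within {x (2*n)..x (2*n+1)})"
    unfolding edge_dom_def by (simp add: power2_eq_square algebra_simps)
qed

lemma boundary_form_eq_sum_edges:
  "boundary_form N x f =
    - (\<Sum>n<N. f n (x (2*n+1)) * edge_deriv x f n (x (2*n+1)) - f n (x (2*n)) * edge_deriv x f n (x (2*n)))"
  unfolding boundary_form_def sum_endpoints_by_edges
  by (simp add: endval_def endderiv_def sum_negf[symmetric] algebra_simps)

text \<open>Integration by parts: for \<open>lam \<le> 0\<close> the energy density is nonnegative and integrates
  to \<open>- boundary_form\<close>, so a vanishing boundary form forces it to vanish identically.\<close>
lemma energy_density_eq_0:
  assumes G: "metric_graph N x V" and f: "edge_eigenfun N x lam f" and lam: "lam \<le> 0"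
    and bd: "boundary_form N x f = 0" and n: "n < N" and t: "t \<in> edge_dom x n"
  shows "(edge_deriv x f n t)\<^sup>2 - lam * (f n t)\<^sup>2 = 0"
proof -
  define \<phi> where "\<phi> m s = (edge_deriv x f m s)\<^sup>2 - lam * (f m s)\<^sup>2" for m s
  define B where "B m = f m (x (2*m+1)) * edge_deriv x f m (x (2*m+1)) - f m (x (2*m)) * edge_deriv x f m (x (2*m))" for m
  have int: "(\<phi> m has_integral B m) (edge_dom x m)" if "m < N" for m
    unfolding \<phi>_def B_def using edge_energy_has_integral[OF G f that] .
  have \<phi>_nonneg: "0 \<le> \<phi> m s" for m s
  proof -
    have "lam * (f m s)\<^sup>2 \<le> 0" using lam by (simp add: mult_nonpos_nonneg)
    then show ?thesis unfolding \<phi>_def by (smt (verit) zero_le_power2)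
  qed
  have "B m \<ge> 0" if "m < N" for m
    using has_integral_nonneg[OF int[OF that]] \<phi>_nonneg by blast
  moreover have "(\<Sum>m<N. B m) = 0"
    using bd boundary_form_eq_sum_edges[of N x f] unfolding B_def by simp
  ultimately have "B n = 0"
    using sum_nonneg_eq_0_iff[of "{..<N}" B] n by simp
  moreover have "continuous_on (edge_dom x n) (\<phi> n)"
    unfolding \<phi>_def using edge_eigenfun_derivs[OF f n]
    by (intro continuous_intros continuous_on_vector_derivative) auto
  ultimately have "\<phi> n t = 0"
    using has_integral_0_cbox_imp_0[of "x (2*n)" "x (2*n+1)" "\<phi> n" t] int[OF n] \<phi>_nonneg
      edge_less[OF G n] t
    unfolding edge_dom_def by simp
  then show ?thesis unfolding \<phi>_def .
qed


lemma sum_mult_const_factor: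
  fixes a b :: "'i \<Rightarrow> 'a::semiring_0"
  assumes "\<And>j. j \<in> v \<Longrightarrow> a j = c"
  shows "(\<Sum>j\<in>v. a j * b j) = c * (\<Sum>j\<in>v. b j)"
proof -
  have "(\<Sum>j\<in>v. a j * b j) = (\<Sum>j\<in>v. c * b j)"
    using assms by (intro sum.cong) auto
  then show ?thesis by (simp add: sum_distrib_left)
qed

lemma boundary_form_standard:
  assumes G: "metric_graph N x V" and f: "standard_cond x V f"
  shows "boundary_form N x f = 0"
proof -
  have "(\<Sum>j\<in>v. endval x f j * endderiv x f j) = 0" if v: "v \<in> V" for v
  proof -
    obtain i where i: "i \<in> v" using vertex_nonempty[OF G v] by blast
    have "endval x f j = endval x f i" if "j \<in> v" for j
      using f v i that unfolding standard_cond_def by blast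
    then have "(\<Sum>j\<in>v. endval x f j * endderiv x f j) = endval x f i * (\<Sum>j\<in>v. endderiv x f j)"
      by (rule sum_mult_const_factor)
    moreover have "(\<Sum>j\<in>v. endderiv x f j) = 0"
      using f v unfolding standard_cond_def by blast
    ultimately show ?thesis by simp
  qed
  then show ?thesis
    unfolding boundary_form_def sum_over_vertices[OF G, symmetric] by simp
qed

lemma boundary_form_antistandard:
  assumes G: "metric_graph N x V" and f: "antistandard_cond x V f"
  shows "boundary_form N x f = 0"
proof -
  have "(\<Sum>j\<in>v. endval x f j * endderiv x f j) = 0" if v: "v \<in> V" for v
  proof -
    obtain i where i: "i \<in> v" using vertex_nonempty[OF G v] by blast
    have "endderiv x f j = endderiv x f i" if "j \<in> v" for j
      using f v i that unfolding antistandard_cond_def by blast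
    then have "(\<Sum>j\<in>v. endderiv x f j * endval x f j) = endderiv x f i * (\<Sum>j\<in>v. endval x f j)"
      by (rule sum_mult_const_factor)
    moreover have "(\<Sum>j\<in>v. endval x f j) = 0"
      using f v unfolding antistandard_cond_def by blast
    ultimately show ?thesis by (simp add: mult.commute)
  qed
  then show ?thesis
    unfolding boundary_form_def sum_over_vertices[OF G, symmetric] by simp
qed

lemma endval_add: "endval x (f + g) j = endval x f j + endval x g j"
  unfolding endval_def by simp

lemma endval_fscale: "endval x (fscale c f) j = c * endval x f j"
  unfolding endval_def fscale_def by simp

lemma endval_zero: "endval x 0 j = 0"
  unfolding endval_def by simp

lemma endderiv_add:
  assumes G: "metric_graph N x V" and "edge_eigenfun N x lam f" "edge_eigenfun N x lam g" and j: "j < 2*N"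
  shows "endderiv x (f + g) j = endderiv x f j + endderiv x g j"
  using edge_eigenfun_add(2)[OF assms(1-3) endpoint_in_edge_dom(2)[OF G j] endpoint_in_edge_dom(1)[OF G j]]
  unfolding endderiv_def by simp

lemma endderiv_fscale:
  assumes G: "metric_graph N x V" and "edge_eigenfun N x lam f" and j: "j < 2*N"
  shows "endderiv x (fscale c f) j = c * endderiv x f j"
  using edge_eigenfun_scale(2)[OF assms(1,2) endpoint_in_edge_dom(2)[OF G j] endpoint_in_edge_dom(1)[OF G j]]
  unfolding endderiv_def by simp

lemma endderiv_zero:
  assumes G: "metric_graph N x V" and j: "j < 2*N"
  shows "endderiv x 0 j = 0"
  using edge_eigenfun_zero(2)[OF G endpoint_in_edge_dom(2)[OF G j] endpoint_in_edge_dom(1)[OF G j]]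
  unfolding endderiv_def by simp

lemma subspace_eigenspace_standard:
  assumes G: "metric_graph N x V"
  shows "FS.subspace (eigenspace N x (standard_cond x V) lam)"
proof (rule FS.subspaceI)
  show "0 \<in> eigenspace N x (standard_cond x V) lam"
    unfolding mem_eigenspace_iff standard_cond_def
    using edge_eigenfun_zero(1)[OF G] endval_zero endderiv_zero[OF G] endpoint_less[OF G]
    by simp
next
  fix f g assume "f \<in> eigenspace N x (standard_cond x V) lam" "g \<in> eigenspace N x (standard_cond x V) lam"
  then have f: "edge_eigenfun N x lam f" "standard_cond x V f"
    and g: "edge_eigenfun N x lam g" "standard_cond x V g"
    by (auto simp: mem_eigenspace_iff)
  have "standard_cond x V (f + g)"
    unfolding standard_cond_def
  proof (intro ballI conjI)
    fix v assume v: "v \<in> V"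
    show "endval x (f + g) i = endval x (f + g) j" if "i \<in> v" "j \<in> v" for i j
      using f(2) g(2) v that unfolding endval_add standard_cond_def by metis
    have "(\<Sum>j\<in>v. endderiv x (f + g) j) = (\<Sum>j\<in>v. endderiv x f j) + (\<Sum>j\<in>v. endderiv x g j)"
      using endderiv_add[OF G f(1) g(1)] endpoint_less[OF G v] by (simp add: sum.distrib)
    then show "(\<Sum>j\<in>v. endderiv x (f + g) j) = 0"
      using f(2) g(2) v unfolding standard_cond_def by simp
  qed
  then show "f + g \<in> eigenspace N x (standard_cond x V) lam"
    using edge_eigenfun_add(1)[OF G f(1) g(1)] by (simp add: mem_eigenspace_iff)
next
  fix c f assume "f \<in> eigenspace N x (standard_cond x V) lam"
  then have f: "edge_eigenfun N x lam f" "standard_cond x V f"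
    by (auto simp: mem_eigenspace_iff)
  have "standard_cond x V (fscale c f)"
    unfolding standard_cond_def
  proof (intro ballI conjI)
    fix v assume v: "v \<in> V"
    show "endval x (fscale c f) i = endval x (fscale c f) j" if "i \<in> v" "j \<in> v" for i j
      using f(2) v that unfolding endval_fscale standard_cond_def by metis
    have "(\<Sum>j\<in>v. endderiv x (fscale c f) j) = c * (\<Sum>j\<in>v. endderiv x f j)"
      using endderiv_fscale[OF G f(1)] endpoint_less[OF G v] by (simp add: sum_distrib_left)
    then show "(\<Sum>j\<in>v. endderiv x (fscale c f) j) = 0"
      using f(2) v unfolding standard_cond_def by simp
  qed
  then show "fscale c f \<in> eigenspace N x (standard_cond x V) lam"
    using edge_eigenfun_scale(1)[OF G f(1)] by (simp add: mem_eigenspace_iff)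
qed

lemma edge_eigenfun_neg_eq_0:
  assumes G: "metric_graph N x V" and f: "edge_eigenfun N x lam f" and lam: "lam < 0"
    and bd: "boundary_form N x f = 0"
  shows "f = 0"
proof (intro ext)
  fix n t
  show "f n t = 0 n t"
  proof (cases "n < N \<and> t \<in> edge_dom x n")
    case True
    then have "(edge_deriv x f n t)\<^sup>2 + (- lam) * (f n t)\<^sup>2 = 0"
      using energy_density_eq_0[OF G f _ bd] lam by simp
    then have "(- lam) * (f n t)\<^sup>2 = 0"
      using lam by (smt (verit) mult_nonneg_nonneg zero_le_power2)
    then show ?thesis using lam by simp
  next
    case False
    then show ?thesis using edge_eigenfun_outside[OF f] by auto
  qed
qed

lemma edge_eigenfun_0_const_on_edge:
  assumes G: "metric_graph N x V" and f: "edge_eigenfun N x 0 f"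
    and bd: "boundary_form N x f = 0" and n: "n < N" and t: "t \<in> edge_dom x n"
  shows "f n t = f n (x (2*n))"
proof -
  have "(f n has_field_derivative 0) (at s within edge_dom x n)" if s: "s \<in> edge_dom x n" for s
    using energy_density_eq_0[OF G f _ bd n s] edge_eigenfun_derivs(1)[OF f n s]
    by (simp add: has_real_derivative_iff_has_vector_derivative)
  then obtain c where "\<forall>s\<in>edge_dom x n. f n s = c"
    using has_field_derivative_zero_constant[of "edge_dom x n" "f n"]
    unfolding edge_dom_def by auto
  moreover have "x (2*n) \<in> edge_dom x n"
    using edge_less[OF G n] unfolding edge_dom_def by simp
  ultimately show ?thesis using t by simp
qed

lemma connected_vertex_invariant_const:
  assumes G: "metric_graph N x V" and C: "graph_connected N V"
    and c: "\<And>v i j. v \<in> V \<Longrightarrow> i \<in> v \<Longrightarrow> j \<in> v \<Longrightarrow> c (i div 2) = c (j div 2)"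
    and n: "n < N"
  shows "c n = c 0"
proof -
  define a where "a = left_vertex V 0"
  have a: "a \<in> V" "0 \<in> a"
    using vertex_of_mem[OF G, of 0] n unfolding a_def by auto
  have reach_const: "\<forall>j\<in>b. c (j div 2) = c 0"
    if "(a, b) \<in> {(a, b). \<exists>m<N. joins V m a b}\<^sup>*" for b
    using that
  proof (induction rule: rtrancl_induct)
    case base
    show ?case using c[OF a(1) _ a(2)] by simp
  next
    case (step b d)
    then obtain m where "joins V m b d" by blast
    then have "d \<in> V" "2*m \<in> b \<and> 2*m+1 \<in> d \<or> 2*m \<in> d \<and> 2*m+1 \<in> b"
      unfolding joins_def by blast+
    moreover have "(2*m) div 2 = m" "(2*m+1) div 2 = m" by simp_all
    ultimately have "c m = c 0" "\<exists>k\<in>d. k div 2 = m"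
      using step.IH by metis+
    then show ?case using c[OF \<open>d \<in> V\<close>] by metis
  qed
  have "2*n < 2*N" using n by simp
  then have "(a, left_vertex V n) \<in> {(a, b). \<exists>m<N. joins V m a b}\<^sup>*"
    using C a vertex_of_mem[OF G] unfolding graph_connected_def by blast
  from reach_const[OF this] vertex_of_mem(2)[OF G \<open>2*n < 2*N\<close>] show ?thesis
    by (metis nonzero_mult_div_cancel_left zero_neq_numeral)
qed

lemma multiplicity_no_edges: "multiplicity_ev 0 x cond lam = 0"
  unfolding multiplicity_ev_def
  by (rule FS_dim_eq_0) (auto simp: mem_eigenspace_iff edge_eigenfun_def fun_eq_iff)

lemma multiplicity_standard_neg:
  assumes G: "metric_graph N x V" and lam: "lam < 0"
  shows "multiplicity_ev N x (standard_cond x V) lam = 0"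
  unfolding multiplicity_ev_def
  using edge_eigenfun_neg_eq_0[OF G _ lam boundary_form_standard[OF G]]
  by (intro FS_dim_eq_0) (auto simp: mem_eigenspace_iff)


definition one_on_edges :: "nat \<Rightarrow> (nat \<Rightarrow> real) \<Rightarrow> nat \<Rightarrow> real \<Rightarrow> real" where
  "one_on_edges N x = (\<lambda>n t. if n < N \<and> t \<in> edge_dom x n then 1 else 0)"

lemma one_on_edges_in_eigenspace_standard:
  assumes G: "metric_graph N x V"
  shows "one_on_edges N x \<in> eigenspace N x (standard_cond x V) 0"
proof -
  let ?u = "one_on_edges N x"
  have "(?u n has_vector_derivative 0) (at t within edge_dom x n)"
    if "n < N" "t \<in> edge_dom x n" for n t
    by (rule has_vector_derivative_transform[OF that(2) _ has_vector_derivative_const[of 1]])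
      (use that in \<open>simp add: one_on_edges_def\<close>)
  moreover have "?u n t = 0" if "N \<le> n \<or> t \<notin> edge_dom x n" for n t
    using that by (auto simp: one_on_edges_def)
  moreover have "((\<lambda>t. 0) has_vector_derivative (- 0 * ?u n t)) (at t within edge_dom x n)" for n t
    by simp
  ultimately have u: "edge_eigenfun N x 0 ?u"
    and u': "\<And>n t. n < N \<Longrightarrow> t \<in> edge_dom x n \<Longrightarrow> edge_deriv x ?u n t = 0"
    using edge_eigenfunI[OF G, where f = ?u and f' = "\<lambda>n t. 0" and lam = 0] by blast+
  have "endval x ?u j = 1" "endderiv x ?u j = 0" if "j < 2*N" for j
    using that endpoint_in_edge_dom[OF G that] u'[of "j div 2" "x j"]
    by (auto simp: endval_def endderiv_def one_on_edges_def)
  then have "standard_cond x V ?u"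
    unfolding standard_cond_def using endpoint_less[OF G] by simp
  with u show ?thesis by (simp add: mem_eigenspace_iff)
qed


lemma multiplicity_standard_0:
  assumes G: "metric_graph N x V" and C: "graph_connected N V" and N: "0 < N"
  shows "multiplicity_ev N x (standard_cond x V) 0 = 1"
  unfolding multiplicity_ev_def
proof (rule FS_dim_eq_1)
  show "one_on_edges N x \<in> eigenspace N x (standard_cond x V) 0"
    by (rule one_on_edges_in_eigenspace_standard[OF G])
  have "x 0 \<in> edge_dom x 0" using edge_less[OF G N] by (simp add: edge_dom_def)
  then show "one_on_edges N x \<noteq> 0"
    using N by (auto simp: one_on_edges_def fun_eq_iff)
  fix f assume "f \<in> eigenspace N x (standard_cond x V) 0"
  then have f: "edge_eigenfun N x 0 f" "standard_cond x V f"
    by (auto simp: mem_eigenspace_iff)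
  define c where "c n = f n (x (2*n))" for n
  have f_eq: "f n t = c n" if "n < N" "t \<in> edge_dom x n" for n t
    unfolding c_def using edge_eigenfun_0_const_on_edge[OF G f(1) boundary_form_standard[OF G f(2)] that] .
  have endval_eq: "endval x f j = c (j div 2)" if "j < 2*N" for j
    unfolding endval_def using f_eq endpoint_in_edge_dom[OF G that] by blast
  have "c (i div 2) = c (j div 2)" if "v \<in> V" "i \<in> v" "j \<in> v" for v i j
  proof -
    have "endval x f i = endval x f j" using f(2) that unfolding standard_cond_def by blast
    then show ?thesis using endval_eq endpoint_less[OF G that(1)] that(2,3) by simp
  qed
  then have c_const: "c n = c 0" if "n < N" for n
    using connected_vertex_invariant_const[OF G C _ that] by blast
  have "f n t = fscale (c 0) (one_on_edges N x) n t" for n t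
    using f_eq[of n t] c_const[of n] edge_eigenfun_outside[OF f(1), of n t]
    by (cases "n < N \<and> t \<in> edge_dom x n") (auto simp: fscale_def one_on_edges_def)
  then have "f = fscale (c 0) (one_on_edges N x)" by blast
  then show "\<exists>c. f = fscale c (one_on_edges N x)" by blast
qed


lemma multiplicity_antistandard_0:
  assumes T: "metric_tree N x V"
  shows "multiplicity_ev N x (antistandard_cond x V) 0 = 0"
  unfolding multiplicity_ev_def
proof (rule FS_dim_eq_0, rule subsetI)
  have G: "metric_graph N x V" using T unfolding metric_tree_def by blast
  fix f assume "f \<in> eigenspace N x (antistandard_cond x V) 0"
  then have f: "edge_eigenfun N x 0 f" "antistandard_cond x V f"
    by (auto simp: mem_eigenspace_iff)
  define c where "c n = f n (x (2*n))" for n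
  have f_eq: "f n t = c n" if "n < N" "t \<in> edge_dom x n" for n t
    unfolding c_def using edge_eigenfun_0_const_on_edge[OF G f(1) boundary_form_antistandard[OF G f(2)] that] .
  have endval_eq: "endval x f j = c (j div 2)" if "j < 2*N" for j
    unfolding endval_def using f_eq endpoint_in_edge_dom[OF G that] by blast
  have "(\<Sum>j\<in>v. c (j div 2)) = 0" if v: "v \<in> V" for v
  proof -
    have "(\<Sum>j\<in>v. c (j div 2)) = (\<Sum>j\<in>v. endval x f j)"
      using endval_eq endpoint_less[OF G v] by (intro sum.cong) auto
    also have "\<dots> = 0" using f(2) v unfolding antistandard_cond_def by blast
    finally show ?thesis .
  qed
  then have "c n = 0" if "n < N" for n
    using tree_vertex_sums_eq_0_imp_eq_0[OF T _ that] by blast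
  then have "f n t = 0" for n t
    using f_eq[of n t] edge_eigenfun_outside[OF f(1), of n t] by (cases "n < N \<and> t \<in> edge_dom x n") auto
  then show "f \<in> {0}" by (simp add: fun_eq_iff)
qed

definition scaled_deriv ::
  "nat \<Rightarrow> (nat \<Rightarrow> real) \<Rightarrow> (nat \<Rightarrow> real) \<Rightarrow> (nat \<Rightarrow> real \<Rightarrow> real) \<Rightarrow> (nat \<Rightarrow> real \<Rightarrow> real)" where
  "scaled_deriv N x \<alpha> f = (\<lambda>n t. if n < N \<and> t \<in> edge_dom x n then \<alpha> n * edge_deriv x f n t else 0)"

lemma edge_eigenfun_scaled_deriv:
  assumes G: "metric_graph N x V" and f: "edge_eigenfun N x lam f"
  shows "edge_eigenfun N x lam (scaled_deriv N x \<alpha> f)"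
    and "\<And>n t. n < N \<Longrightarrow> t \<in> edge_dom x n \<Longrightarrow>
      edge_deriv x (scaled_deriv N x \<alpha> f) n t = \<alpha> n * (- lam * f n t)"
proof -
  let ?h = "scaled_deriv N x \<alpha> f" and ?d = "\<lambda>n t. \<alpha> n * (- lam * f n t)"
  have "?h n t = 0" if "N \<le> n \<or> t \<notin> edge_dom x n" for n t
    using that by (auto simp: scaled_deriv_def)
  moreover have "(?h n has_vector_derivative ?d n t) (at t within edge_dom x n)"
    if "n < N" "t \<in> edge_dom x n" for n t
    by (rule has_vector_derivative_transform[OF that(2) _
          has_vector_derivative_mult_right[OF edge_eigenfun_derivs(2)[OF f that]]])
      (use that in \<open>simp add: scaled_deriv_def\<close>)
  moreover have "(?d n has_vector_derivative (- lam * ?h n t)) (at t within edge_dom x n)"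
    if "n < N" "t \<in> edge_dom x n" for n t
    using has_vector_derivative_mult_right[OF edge_eigenfun_derivs(1)[OF f that], of "\<alpha> n * - lam"] that
    by (simp add: scaled_deriv_def algebra_simps)
  ultimately show "edge_eigenfun N x lam ?h"
    and "\<And>n t. n < N \<Longrightarrow> t \<in> edge_dom x n \<Longrightarrow> edge_deriv x ?h n t = ?d n t"
    using edge_eigenfunI[OF G, where f = ?h and f' = ?d] by blast+
qed

lemma scaled_deriv_add:
  assumes G: "metric_graph N x V" and "edge_eigenfun N x lam f" "edge_eigenfun N x lam g"
  shows "scaled_deriv N x \<alpha> (f + g) = scaled_deriv N x \<alpha> f + scaled_deriv N x \<alpha> g"
  using edge_eigenfun_add(2)[OF assms]
  by (auto simp: fun_eq_iff scaled_deriv_def algebra_simps)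

lemma scaled_deriv_fscale:
  assumes G: "metric_graph N x V" and "edge_eigenfun N x lam f"
  shows "scaled_deriv N x \<alpha> (fscale c f) = fscale c (scaled_deriv N x \<alpha> f)"
  using edge_eigenfun_scale(2)[OF assms]
  by (auto simp: fun_eq_iff scaled_deriv_def fscale_def)

lemma scaled_deriv_scaled_deriv:
  assumes G: "metric_graph N x V" and f: "edge_eigenfun N x lam f"
    and \<alpha>\<beta>: "\<And>n. n < N \<Longrightarrow> - lam * \<alpha> n * \<beta> n = 1"
  shows "scaled_deriv N x \<beta> (scaled_deriv N x \<alpha> f) = f"
proof (intro ext)
  fix n t
  show "scaled_deriv N x \<beta> (scaled_deriv N x \<alpha> f) n t = f n t"
  proof (cases "n < N \<and> t \<in> edge_dom x n")
    case True
    then have "scaled_deriv N x \<beta> (scaled_deriv N x \<alpha> f) n t = (- lam * \<alpha> n * \<beta> n) * f n t"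
      using edge_eigenfun_scaled_deriv(2)[OF G f] by (simp add: scaled_deriv_def algebra_simps)
    then show ?thesis using \<alpha>\<beta> True by simp
  next
    case False
    then show ?thesis using edge_eigenfun_outside[OF f] by (auto simp: scaled_deriv_def)
  qed
qed

definition endpoint_sign :: "nat \<Rightarrow> real" where
  "endpoint_sign j = (if even j then 1 else -1)"

lemma endval_scaled_deriv:
  assumes G: "metric_graph N x V" and j: "j < 2*N"
  shows "endval x (scaled_deriv N x \<alpha> f) j = \<alpha> (j div 2) * endpoint_sign j * endderiv x f j"
  using endpoint_in_edge_dom[OF G j]
  by (simp add: endval_def endderiv_def scaled_deriv_def endpoint_sign_def)

lemma endderiv_scaled_deriv:
  assumes G: "metric_graph N x V" and f: "edge_eigenfun N x lam f" and j: "j < 2*N"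
  shows "endderiv x (scaled_deriv N x \<alpha> f) j = - lam * \<alpha> (j div 2) * endpoint_sign j * endval x f j"
  using edge_eigenfun_scaled_deriv(2)[OF G f endpoint_in_edge_dom(2)[OF G j] endpoint_in_edge_dom(1)[OF G j]]
  by (simp add: endval_def endderiv_def endpoint_sign_def)

lemma scaled_deriv_standard_to_antistandard:
  assumes G: "metric_graph N x V" and f: "f \<in> eigenspace N x (standard_cond x V) lam"
    and w: "\<And>v j. v \<in> V \<Longrightarrow> j \<in> v \<Longrightarrow> \<alpha> (j div 2) * endpoint_sign j = w v"
  shows "scaled_deriv N x \<alpha> f \<in> eigenspace N x (antistandard_cond x V) lam"
proof -
  have f: "edge_eigenfun N x lam f" "standard_cond x V f"
    using f by (auto simp: mem_eigenspace_iff)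
  let ?h = "scaled_deriv N x \<alpha> f"
  have "antistandard_cond x V ?h"
    unfolding antistandard_cond_def
  proof (intro ballI conjI)
    fix v assume v: "v \<in> V"
    have "(\<Sum>j\<in>v. endval x ?h j) = (\<Sum>j\<in>v. w v * endderiv x f j)"
      using endval_scaled_deriv[OF G] endpoint_less[OF G v] w[OF v] by (intro sum.cong) auto
    also have "\<dots> = w v * (\<Sum>j\<in>v. endderiv x f j)"
      by (simp add: sum_distrib_left)
    also have "\<dots> = 0"
      using f(2) v unfolding standard_cond_def by simp
    finally show "(\<Sum>j\<in>v. endval x ?h j) = 0" .
    have deriv: "endderiv x ?h j = - lam * w v * endval x f j" if "j \<in> v" for j
      using endderiv_scaled_deriv[OF G f(1) endpoint_less[OF G v that]] w[OF v that]
      by (simp add: algebra_simps)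
    show "endderiv x ?h i = endderiv x ?h j" if "i \<in> v" "j \<in> v" for i j
      using f(2) v that deriv[OF that(1)] deriv[OF that(2)] unfolding standard_cond_def by metis
  qed
  then show ?thesis
    using edge_eigenfun_scaled_deriv(1)[OF G f(1)] by (simp add: mem_eigenspace_iff)
qed

lemma scaled_deriv_antistandard_to_standard:
  assumes G: "metric_graph N x V" and g: "g \<in> eigenspace N x (antistandard_cond x V) lam"
    and w: "\<And>v j. v \<in> V \<Longrightarrow> j \<in> v \<Longrightarrow> \<alpha> (j div 2) * endpoint_sign j = w v"
  shows "scaled_deriv N x \<alpha> g \<in> eigenspace N x (standard_cond x V) lam"
proof -
  have g: "edge_eigenfun N x lam g" "antistandard_cond x V g"
    using g by (auto simp: mem_eigenspace_iff)
  let ?h = "scaled_deriv N x \<alpha> g"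
  have "standard_cond x V ?h"
    unfolding standard_cond_def
  proof (intro ballI conjI)
    fix v assume v: "v \<in> V"
    have val: "endval x ?h j = w v * endderiv x g j" if "j \<in> v" for j
      using endval_scaled_deriv[OF G endpoint_less[OF G v that]] w[OF v that] by simp
    show "endval x ?h i = endval x ?h j" if "i \<in> v" "j \<in> v" for i j
      using g(2) v that val[OF that(1)] val[OF that(2)] unfolding antistandard_cond_def by metis
    have "(\<Sum>j\<in>v. endderiv x ?h j) = (\<Sum>j\<in>v. - lam * w v * endval x g j)"
      using endderiv_scaled_deriv[OF G g(1)] endpoint_less[OF G v] w[OF v]
      by (intro sum.cong) (auto simp: algebra_simps)
    also have "\<dots> = - lam * w v * (\<Sum>j\<in>v. endval x g j)"
      by (simp add: sum_distrib_left)
    also have "\<dots> = 0"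
      using g(2) v unfolding antistandard_cond_def by simp
    finally show "(\<Sum>j\<in>v. endderiv x ?h j) = 0" .
  qed
  then show ?thesis
    using edge_eigenfun_scaled_deriv(1)[OF G g(1)] by (simp add: mem_eigenspace_iff)
qed

lemma alternating_vertex_sign:
  assumes G: "metric_graph N x V"
    and y: "\<And>n. n < N \<Longrightarrow> y (left_vertex V n) = - y (right_vertex V n)"
    and v: "v \<in> V" "j \<in> v"
  shows "y (left_vertex V (j div 2)) * endpoint_sign j = y v"
proof -
  have "j div 2 < N" using endpoint_less[OF G v] by simp
  moreover have "j = 2 * (j div 2) \<or> j = 2 * (j div 2) + 1" by auto
  ultimately have "y (vertex_of V j) = y (left_vertex V (j div 2)) * endpoint_sign j"
    using y[of "j div 2"] by (auto simp: endpoint_sign_def)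
  then show ?thesis using vertex_of_eq[OF G v] by simp
qed

lemma multiplicity_antistandard_eq_standard:
  assumes T: "metric_tree N x V" and lam: "lam \<noteq> 0"
  shows "multiplicity_ev N x (antistandard_cond x V) lam = multiplicity_ev N x (standard_cond x V) lam"
proof -
  have G: "metric_graph N x V" using T unfolding metric_tree_def by blast
  obtain y :: "nat set \<Rightarrow> real" where y_sign: "\<And>v. y v = 1 \<or> y v = -1"
    and y_alt: "\<And>n. n < N \<Longrightarrow> y (left_vertex V n) = - y (right_vertex V n)"
    using tree_bipartite[OF T] by blast
  define \<sigma> where "\<sigma> n = y (left_vertex V n)" for n
  define \<tau> where "\<tau> n = - \<sigma> n / lam" for n
  have \<sigma>: "\<sigma> (j div 2) * endpoint_sign j = y v" if "v \<in> V" "j \<in> v" for v j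
    unfolding \<sigma>_def using alternating_vertex_sign[OF G y_alt that] .
  have \<tau>: "\<tau> (j div 2) * endpoint_sign j = - y v / lam" if "v \<in> V" "j \<in> v" for v j
    using \<sigma>[OF that] unfolding \<tau>_def by (simp add: field_simps)
  have \<sigma>\<tau>: "- lam * \<sigma> n * \<tau> n = 1" "- lam * \<tau> n * \<sigma> n = 1" for n
    using lam y_sign[of "left_vertex V n"] unfolding \<tau>_def \<sigma>_def by (auto simp: field_simps)
  let ?Es = "eigenspace N x (standard_cond x V) lam"
  let ?Ea = "eigenspace N x (antistandard_cond x V) lam"
  have "bij_betw (scaled_deriv N x \<sigma>) ?Es ?Ea"
  proof (rule bij_betw_byWitness[where f' = "scaled_deriv N x \<tau>"])
    show "\<forall>f\<in>?Es. scaled_deriv N x \<tau> (scaled_deriv N x \<sigma> f) = f"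
      using scaled_deriv_scaled_deriv[OF G _ \<sigma>\<tau>(1)] by (simp add: mem_eigenspace_iff)
    show "\<forall>g\<in>?Ea. scaled_deriv N x \<sigma> (scaled_deriv N x \<tau> g) = g"
      using scaled_deriv_scaled_deriv[OF G _ \<sigma>\<tau>(2)] by (simp add: mem_eigenspace_iff)
    show "scaled_deriv N x \<sigma> ` ?Es \<subseteq> ?Ea"
      using scaled_deriv_standard_to_antistandard[where w = y, OF G _ \<sigma>] by blast
    show "scaled_deriv N x \<tau> ` ?Ea \<subseteq> ?Es"
      using scaled_deriv_antistandard_to_standard[where w = "\<lambda>v. - y v / lam", OF G _ \<tau>] by blast
  qed
  then show ?thesis
    unfolding multiplicity_ev_def
    by (rule FP.dim_eq_if_bij_betw_linear_on[OF subspace_eigenspace_standard[OF G]])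
      (auto simp: mem_eigenspace_iff scaled_deriv_add[OF G] scaled_deriv_fscale[OF G])
qed

lemma eigenvalue_count_shift:
  fixes ma ms :: "real \<Rightarrow> nat"
  assumes same: "\<And>lam. lam \<noteq> 0 \<Longrightarrow> ma lam = ms lam" and ma0: "ma 0 = 0" and ms0: "ms 0 = 1"
    and neg: "\<And>lam. lam < 0 \<Longrightarrow> ms lam = 0" and k: "1 \<le> k"
  shows "k \<le> (\<Sum>lam\<in>{lam. lam \<le> mu \<and> 0 < ma lam}. ma lam) \<longleftrightarrow>
    Suc k \<le> (\<Sum>lam\<in>{lam. lam \<le> mu \<and> 0 < ms lam}. ms lam)"
proof -
  define S where "S = {lam. lam \<le> mu \<and> 0 < ms lam}"
  have "{lam. lam \<le> mu \<and> 0 < ma lam} = S - {0}"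
  proof (intro set_eqI iffI)
    fix lam assume "lam \<in> {lam. lam \<le> mu \<and> 0 < ma lam}"
    moreover from this have "lam \<noteq> 0" using ma0 by auto
    ultimately show "lam \<in> S - {0}" unfolding S_def using same by simp
  next
    fix lam assume "lam \<in> S - {0}"
    then show "lam \<in> {lam. lam \<le> mu \<and> 0 < ma lam}" unfolding S_def using same by simp
  qed
  then have count_a: "(\<Sum>lam\<in>{lam. lam \<le> mu \<and> 0 < ma lam}. ma lam) = (\<Sum>lam\<in>S - {0}. ms lam)"
    using same by (intro sum.cong) auto
  show ?thesis
  proof (cases "0 \<le> mu")
    case True
    then have "0 \<in> S" unfolding S_def using ms0 by simp
    then show ?thesis
      using sum.remove[of S 0 ms] ms0 k unfolding count_a S_def[symmetric]
      by (cases "finite S") auto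
  next
    case False
    then have "S = {}" unfolding S_def using neg by force
    then show ?thesis unfolding count_a S_def[symmetric] using k by simp
  qed
qed

theorem mainTheorem5:
  fixes N :: nat and x :: "nat \<Rightarrow> real" and V :: "nat set set" and k :: nat
  assumes "metric_tree N x V" and "1 \<le> k"
  shows "lap_eigenvalue N x (antistandard_cond x V) k = lap_eigenvalue N x (standard_cond x V) (Suc k)"
proof -
  have G: "metric_graph N x V" and C: "graph_connected N V"
    using assms(1) unfolding metric_tree_def by blast+
  have "k \<le> ev_count N x (antistandard_cond x V) mu \<longleftrightarrow> Suc k \<le> ev_count N x (standard_cond x V) mu" for mu
  proof (cases "N = 0")
    case True
    then show ?thesis using assms(2) by (simp add: ev_count_def multiplicity_no_edges)
  next
    case False
    then show ?thesis
      unfolding ev_count_def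
      using multiplicity_antistandard_eq_standard[OF assms(1)] multiplicity_antistandard_0[OF assms(1)]
        multiplicity_standard_0[OF G C] multiplicity_standard_neg[OF G] assms(2)
      by (intro eigenvalue_count_shift) auto
  qed
  then show ?thesis unfolding lap_eigenvalue_def by simp
qed

end
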